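(* Let $d\ge 0$ and let $G$ be a $d$-manifold with $w(G)=1+(-1)^d$. Then $G$ is Dehn-Sommerville.
   Context: A finite abstract simplicial complex is a finite set of non-empty finite sets closed under taking non-empty subsets. For $x\in G$, $w(x)=(-1)^{|x|-1}$ and $w(A)=\sum_{x\in A}w(x)$. For $x\in G$: $U(x)=\{y\in G: x\subset y\}$, $B(x)=\{y\in G : y\subset z \text{ for some } z\in U(x)\}$, $S(x)=B(x)\setminus U(x)$. A one-point complex $\{\{v\}\}$ is contractible, and $G$ is contractible if there is $x\in G$ with $S(x)$ and $G\setminus U(x)$ both contractible. The empty complex is the $(-1)$-sphere; for $k\ge 0$, $G$ is a $k$-manifold if every unit sphere $S(x)$, $x\in G$, is a $(k-1)$-sphere, and a $k$-sphere if it is a $k$-manifold and $G\setminus U(x)$ is contractible for some $x\in G$. For a complex $G$ of maximal dimension $d=\max_{x\in G}(|x|-1)$, $f_k(G)$ is the number of elements of cardinality $k+1$, $f_G(t)=1+\sum_{k=0}^d f_k(G)t^{k+1}$, and $h_G(x)=(x-1)^{d+1}f_G(1/(x-1))=h_0+h_1x+\cdots+h_{d+1}x^{d+1}$; $G$ is Dehn-Sommerville if $h_i=h_{d+1-i}$ for all $i=0,\dots,d+1$. *)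

theory Defs
  imports "HOL-Computational_Algebra.Polynomial"
begin

definition simplicial_complex :: "'a set set \<Rightarrow> bool" where
  "simplicial_complex G \<longleftrightarrow> finite G \<and> (\<forall>x\<in>G. x \<noteq> {} \<and> finite x) \<and>
     (\<forall>x\<in>G. \<forall>y. y \<subseteq> x \<and> y \<noteq> {} \<longrightarrow> y \<in> G)"

definition wx :: "'a set \<Rightarrow> int" where
  "wx x = (-1) ^ (card x - 1)"

definition wG :: "'a set set \<Rightarrow> int" where
  "wG A = (\<Sum>x\<in>A. wx x)"

definition U :: "'a set set \<Rightarrow> 'a set \<Rightarrow> 'a set set" where
  "U G x = {y\<in>G. x \<subseteq> y}"

definition B :: "'a set set \<Rightarrow> 'a set \<Rightarrow> 'a set set" where
  "B G x = {y\<in>G. \<exists>z\<in>U G x. y \<subseteq> z}"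

definition S :: "'a set set \<Rightarrow> 'a set \<Rightarrow> 'a set set" where
  "S G x = B G x - U G x"

inductive contractible :: "'a set set \<Rightarrow> bool" where
  point: "contractible {{v}}"
| step: "x \<in> G \<Longrightarrow> contractible (S G x) \<Longrightarrow> contractible (G - U G x) \<Longrightarrow> contractible G"

text \<open>sph k G: G is a (k-1)-sphere (so sph 0 G means G is the (-1)-sphere, i.e. empty).\<close>
fun sph :: "nat \<Rightarrow> 'a set set \<Rightarrow> bool" where
  "sph 0 G = (G = {})"
| "sph (Suc k) G = ((\<forall>x\<in>G. sph k (S G x)) \<and> (\<exists>x\<in>G. contractible (G - U G x)))"

definition manifold :: "nat \<Rightarrow> 'a set set \<Rightarrow> bool" where
  "manifold d G \<longleftrightarrow> (\<forall>x\<in>G. sph d (S G x))"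

text \<open>dimp1 G = d + 1 where d is the maximal dimension (d = -1 for the empty complex).\<close>
definition dimp1 :: "'a set set \<Rightarrow> nat" where
  "dimp1 G = Max (insert 0 (card ` G))"

definition fvec :: "'a set set \<Rightarrow> nat \<Rightarrow> nat" where
  "fvec G k = card {x\<in>G. card x = k + 1}"

definition fpoly :: "'a set set \<Rightarrow> int poly" where
  "fpoly G = 1 + (\<Sum>k<dimp1 G. monom (int (fvec G k)) (k + 1))"

text \<open>h_G(x) = (x-1)^(d+1) f_G(1/(x-1)), written out: for f_G = sum_{j<=d+1} c_j t^j
  this is sum_{j<=d+1} c_j (x-1)^(d+1-j).\<close>
definition hpoly :: "'a set set \<Rightarrow> int poly" where
  "hpoly G = (\<Sum>j\<le>dimp1 G. smult (coeff (fpoly G) j) ([:-1, 1:] ^ (dimp1 G - j)))"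

definition dehn_sommerville :: "'a set set \<Rightarrow> bool" where
  "dehn_sommerville G \<longleftrightarrow>
     (\<forall>i\<le>dimp1 G. coeff (hpoly G) i = coeff (hpoly G) (dimp1 G - i))"

end

theory Submission
  imports Defs "HOL-Library.Disjoint_Sets"
begin

text \<open>
  The weight w is additive, and toggling a fixed vertex of x pairs off the sets y with
  y \<union> x \<in> G, so w(B(x)) = 1 and w(U(x)) = 1 - w(S(x)). Induction along the definitions then
  gives w = 1 for contractible complexes and w = 1 - (-1)^k for (k-1)-spheres, hence
  w(U(x)) = (-1)^d for every face x of a d-manifold. Summing w(U(x)) over the faces x of
  cardinality k counts every face y with multiplicity C(|y|, k); this yields the relations
  sum_j (-1)^j C(j, k) c_j = -(-1)^d c_k between the coefficients c_j of f_G (for k = 0 it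
  is the hypothesis on w(G)). They say f_G(-1 - t) = (-1)^(d+1) f_G(t), and the substitution
  t = 1/(x - 1), which sends -1 - t to x/(1 - x), turns this into x^(d+1) h_G(1/x) = h_G(x).
\<close>

section \<open>The weight of stars and spheres\<close>

lemma simplicial_complexD:
  assumes "simplicial_complex G"
  shows simplicial_complex_finite: "finite G"
    and simplicial_complex_face: "x \<in> G \<Longrightarrow> x \<noteq> {} \<and> finite x"
    and simplicial_complex_subface: "x \<in> G \<Longrightarrow> y \<subseteq> x \<Longrightarrow> y \<noteq> {} \<Longrightarrow> y \<in> G"
  using assms unfolding simplicial_complex_def by blast+

lemma mem_S_iff: "y \<in> S G x \<longleftrightarrow> y \<in> G \<and> (\<exists>z\<in>G. x \<subseteq> z \<and> y \<subseteq> z) \<and> \<not> x \<subseteq> y"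
  unfolding S_def B_def U_def by blast

lemma simplicial_complex_S:
  assumes G: "simplicial_complex G"
  shows "simplicial_complex (S G x)"
  unfolding simplicial_complex_def
proof (intro conjI ballI allI impI)
  have "S G x \<subseteq> G" unfolding S_def B_def by blast
  then show "finite (S G x)"
    using simplicial_complex_finite[OF G] finite_subset by blast
  fix y assume y: "y \<in> S G x"
  then have yG: "y \<in> G" by (simp add: mem_S_iff)
  show "y \<noteq> {}" "finite y" using simplicial_complex_face[OF G yG] by auto
  fix y' assume y': "y' \<subseteq> y \<and> y' \<noteq> {}"
  obtain z where "z \<in> G" "x \<subseteq> z" "y \<subseteq> z" and "\<not> x \<subseteq> y"
    using y by (auto simp: mem_S_iff)
  with y' simplicial_complex_subface[OF G yG, of y'] show "y' \<in> S G x"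
    by (auto simp: mem_S_iff)
qed

lemma simplicial_complex_Diff_U:
  assumes G: "simplicial_complex G"
  shows "simplicial_complex (G - U G x)"
  unfolding simplicial_complex_def
proof (intro conjI ballI allI impI)
  show "finite (G - U G x)" using simplicial_complex_finite[OF G] by blast
  fix y assume y: "y \<in> G - U G x"
  then have yG: "y \<in> G" and "\<not> x \<subseteq> y" by (auto simp: U_def)
  show "y \<noteq> {}" "finite y" using simplicial_complex_face[OF G yG] by auto
  fix y' assume "y' \<subseteq> y \<and> y' \<noteq> {}"
  with \<open>\<not> x \<subseteq> y\<close> simplicial_complex_subface[OF G yG, of y'] show "y' \<in> G - U G x"
    by (auto simp: U_def)
qed

lemma B_eq:
  assumes G: "simplicial_complex G" and x: "x \<in> G"
  shows "B G x = {y\<in>G. y \<union> x \<in> G}"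
proof
  show "B G x \<subseteq> {y\<in>G. y \<union> x \<in> G}"
  proof
    fix y assume "y \<in> B G x"
    then obtain z where "y \<in> G" "z \<in> G" "x \<subseteq> z" "y \<subseteq> z" unfolding B_def U_def by blast
    moreover have "y \<union> x \<noteq> {}" using simplicial_complex_face[OF G x] by blast
    ultimately show "y \<in> {y\<in>G. y \<union> x \<in> G}"
      using simplicial_complex_subface[OF G, of z "y \<union> x"] by blast
  qed
  show "{y\<in>G. y \<union> x \<in> G} \<subseteq> B G x" unfolding B_def U_def by blast
qed

lemma wx_eq: "finite y \<Longrightarrow> y \<noteq> {} \<Longrightarrow> wx y = - ((-1) ^ card y)"
  unfolding wx_def by (cases "card y") auto

lemma wG_eq_neg_sum:
  assumes "\<And>y. y \<in> A \<Longrightarrow> y \<noteq> {} \<and> finite y"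
  shows "wG A = - (\<Sum>y\<in>A. (-1) ^ card y)"
  unfolding wG_def sum_negf[symmetric] using assms by (intro sum.cong) (auto simp: wx_eq)

lemma wG_Diff_U:
  assumes "finite G"
  shows "wG G = wG (G - U G x) + wG (U G x)"
proof -
  have "U G x \<subseteq> G" unfolding U_def by auto
  with assms show ?thesis unfolding wG_def by (metis sum.subset_diff)
qed

lemma sum_minus_one_power_card_eq_0:
  assumes "\<And>y. y \<in> P \<Longrightarrow> finite y"
    and "\<And>y. y \<in> P \<Longrightarrow> insert v y \<in> P \<and> y - {v} \<in> P"
  shows "(\<Sum>y\<in>P. (-1::int) ^ card y) = 0"
proof (rule sum_involution_eq_0)
  let ?toggle = "\<lambda>y. if v \<in> y then y - {v} else insert v y"
  fix y assume y: "y \<in> P"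
  show "?toggle y \<in> P" "?toggle (?toggle y) = y" "?toggle y \<noteq> y"
    using assms(2)[OF y] by (auto simp: insert_absorb)
  show "(-1) ^ card (?toggle y) + (-1::int) ^ card y = 0"
  proof (cases "v \<in> y")
    case True
    then obtain m where "card y = Suc m" using assms(1)[OF y] by (metis card_Suc_Diff1)
    with True show ?thesis using assms(1)[OF y] by simp
  qed (use assms(1)[OF y] in simp)
qed

lemma wG_B:
  assumes G: "simplicial_complex G" and x: "x \<in> G"
  shows "wG (B G x) = 1"
proof -
  obtain v where "v \<in> x" using simplicial_complex_face[OF G x] by blast
  define P where "P = {y. y \<union> x \<in> G}"
  have "(\<Sum>y\<in>P. (-1::int) ^ card y) = 0"
  proof (rule sum_minus_one_power_card_eq_0)
    fix y assume "y \<in> P"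
    then show "finite y"
      unfolding P_def using simplicial_complex_face[OF G, of "y \<union> x"] by simp
    have "insert v y \<union> x = y \<union> x" "(y - {v}) \<union> x = y \<union> x"
      using \<open>v \<in> x\<close> by auto
    with \<open>y \<in> P\<close> show "insert v y \<in> P \<and> y - {v} \<in> P"
      unfolding P_def by simp
  qed
  moreover have "P = insert {} (B G x)"
  proof (intro equalityI subsetI)
    fix y assume "y \<in> P"
    then show "y \<in> insert {} (B G x)"
      using simplicial_complex_subface[OF G, of "y \<union> x" y] unfolding B_eq[OF G x] P_def by blast
  qed (use x in \<open>auto simp: B_eq[OF G x] P_def\<close>)
  moreover have "{} \<notin> B G x" "finite (B G x)"
    using simplicial_complex_face[OF G] simplicial_complex_finite[OF G] unfolding B_def by auto
  ultimately have "1 + (\<Sum>y\<in>B G x. (-1::int) ^ card y) = 0" by simp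
  moreover have "wG (B G x) = - (\<Sum>y\<in>B G x. (-1) ^ card y)"
    using simplicial_complex_face[OF G] by (intro wG_eq_neg_sum) (auto simp: B_def)
  ultimately show ?thesis by simp
qed

lemma wG_U:
  assumes G: "simplicial_complex G" and x: "x \<in> G"
  shows "wG (U G x) = 1 - wG (S G x)"
proof -
  have "U G x \<subseteq> B G x" "finite (B G x)"
    using simplicial_complex_finite[OF G] unfolding U_def B_def by auto
  then have "wG (B G x) = wG (U G x) + wG (S G x)"
    unfolding wG_def S_def by (metis add.commute sum.subset_diff)
  with wG_B[OF G x] show ?thesis by simp
qed

lemma contractible_wG: "contractible G \<Longrightarrow> simplicial_complex G \<Longrightarrow> wG G = 1"
proof (induction rule: contractible.induct)
  case (point v)
  then show ?case by (simp add: wG_def wx_def)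
next
  case (step x G)
  then show ?case
    using wG_Diff_U[OF simplicial_complex_finite, of G x] wG_U[of G x]
      simplicial_complex_S[of G x] simplicial_complex_Diff_U[of G x] by simp
qed

lemma sph_wG: "sph k G \<Longrightarrow> simplicial_complex G \<Longrightarrow> wG G = 1 - (-1) ^ k"
proof (induction k arbitrary: G)
  case 0
  then show ?case by (simp add: wG_def)
next
  case (Suc k)
  then obtain x where x: "x \<in> G" "contractible (G - U G x)" by auto
  have "wG (S G x) = 1 - (-1) ^ k"
    using Suc simplicial_complex_S x(1) by auto
  moreover have "wG (G - U G x) = 1"
    using contractible_wG x(2) simplicial_complex_Diff_U Suc.prems(2) by blast
  ultimately show ?case
    using wG_Diff_U[OF simplicial_complex_finite[OF Suc.prems(2)], of x] wG_U[OF Suc.prems(2) x(1)]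
    by simp
qed

lemma manifold_wG_U:
  assumes "simplicial_complex G" "manifold d G" "x \<in> G"
  shows "wG (U G x) = (-1) ^ d"
  using assms wG_U sph_wG[of d "S G x"] simplicial_complex_S unfolding manifold_def by force

section \<open>Face relations of manifolds\<close>

lemma sum_wG_U_faces:
  assumes G: "simplicial_complex G" and "k \<noteq> 0"
  shows "(\<Sum>x\<in>{x\<in>G. card x = k}. wG (U G x)) = (\<Sum>y\<in>G. wx y * of_nat (card y choose k))"
proof -
  have fin: "finite G" using simplicial_complex_finite[OF G] .
  have faces_of_y: "{x\<in>G. card x = k \<and> x \<subseteq> y} = {x. x \<subseteq> y \<and> card x = k}" if "y \<in> G" for y
    using simplicial_complex_subface[OF G that] \<open>k \<noteq> 0\<close> by (auto simp: card_gt_0_iff)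
  have "(\<Sum>x\<in>{x\<in>G. card x = k}. wG (U G x))
      = (\<Sum>x\<in>{x\<in>G. card x = k}. \<Sum>y\<in>{y\<in>G. x \<subseteq> y}. wx y)"
    unfolding wG_def U_def ..
  also have "\<dots> = (\<Sum>y\<in>G. \<Sum>x\<in>{x\<in>{x\<in>G. card x = k}. x \<subseteq> y}. wx y)"
    using fin by (intro sum.swap_restrict) auto
  also have "\<dots> = (\<Sum>y\<in>G. wx y * of_nat (card y choose k))"
    using simplicial_complex_face[OF G] by (intro sum.cong) (simp_all add: faces_of_y n_subsets)
  finally show ?thesis .
qed

text \<open>Adjoining the empty face makes the constant term 1 of f_G a face count, so the case
  k = 0, which is the hypothesis on w(G), takes the same form as the others.\<close>

lemma manifold_face_relation:
  assumes G: "simplicial_complex G" and M: "manifold d G" and w: "wG G = 1 + (-1) ^ d"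
  shows "(\<Sum>y\<in>insert {} G. (-1) ^ card y * int (card y choose k))
    = - ((-1) ^ d * int (card {y\<in>insert {} G. card y = k}))"
proof (cases "k = 0")
  case True
  have "{y\<in>insert {} G. card y = 0} = {{}}" "{} \<notin> G"
    using simplicial_complex_face[OF G] by auto
  moreover have "wG G = - (\<Sum>y\<in>G. (-1) ^ card y)"
    using simplicial_complex_face[OF G] by (intro wG_eq_neg_sum) auto
  ultimately show ?thesis
    using True w simplicial_complex_finite[OF G] by simp
next
  case False
  have "(\<Sum>y\<in>insert {} G. (-1) ^ card y * int (card y choose k))
      = (\<Sum>y\<in>G. (-1) ^ card y * int (card y choose k))"
    using False simplicial_complex_finite[OF G] by (simp add: sum.insert_if)
  also have "\<dots> = - (\<Sum>y\<in>G. wx y * int (card y choose k))"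
    using simplicial_complex_face[OF G] by (simp add: wx_eq flip: sum_negf)
  also have "\<dots> = - (\<Sum>x\<in>{x\<in>G. card x = k}. wG (U G x))"
    using sum_wG_U_faces[OF G False] by simp
  also have "\<dots> = - ((-1) ^ d * int (card {x\<in>G. card x = k}))"
    using manifold_wG_U[OF G M] by simp
  also have "{x\<in>G. card x = k} = {y\<in>insert {} G. card y = k}"
    using False by auto
  finally show ?thesis .
qed

lemma sum_by_card:
  fixes g :: "nat \<Rightarrow> 'b::comm_semiring_1"
  assumes "finite A" and "\<And>y. y \<in> A \<Longrightarrow> card y \<le> n"
  shows "(\<Sum>y\<in>A. g (card y)) = (\<Sum>j\<le>n. of_nat (card {y\<in>A. card y = j}) * g j)"
proof -
  have "(\<Sum>y\<in>A. g (card y)) = (\<Sum>j\<le>n. \<Sum>y\<in>{y\<in>A. card y = j}. g (card y))"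
    using assms by (intro sum.group[symmetric]) auto
  also have "\<dots> = (\<Sum>j\<le>n. of_nat (card {y\<in>A. card y = j}) * g j)"
    by (intro sum.cong) auto
  finally show ?thesis .
qed

lemma dimp1_eq_Max: "dimp1 G = Max (card ` insert {} G)"
  by (simp add: dimp1_def)

lemma coeff_fpoly:
  assumes G: "simplicial_complex G" and "j \<le> dimp1 G"
  shows "coeff (fpoly G) j = int (card {y\<in>insert {} G. card y = j})"
proof (cases j)
  case 0
  have "{y\<in>insert {} G. card y = 0} = {{}}"
    using simplicial_complex_face[OF G] by auto
  with 0 show ?thesis
    unfolding fpoly_def by (simp add: coeff_sum coeff_monom)
next
  case (Suc i)
  have "{y\<in>insert {} G. card y = j} = {y\<in>G. card y = i + 1}" using Suc by auto
  with Suc assms(2) show ?thesis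
    unfolding fpoly_def fvec_def by (simp add: coeff_sum coeff_monom)
qed

lemma coeff_fpoly_dimp1_neq_0:
  assumes G: "simplicial_complex G"
  shows "coeff (fpoly G) (dimp1 G) \<noteq> 0"
proof -
  have fin: "finite (insert {} G)" using simplicial_complex_finite[OF G] by simp
  then have "dimp1 G \<in> card ` insert {} G"
    unfolding dimp1_eq_Max by (intro Max_in) auto
  then obtain y where "dimp1 G = card y" "y \<in> insert {} G" by (rule imageE)
  with fin have "card {y\<in>insert {} G. card y = dimp1 G} \<noteq> 0" by auto
  then show ?thesis using coeff_fpoly[OF G] by simp
qed

lemma fpoly_face_relation:
  assumes G: "simplicial_complex G" and "manifold d G" and "wG G = 1 + (-1) ^ d"
    and "k \<le> dimp1 G"
  shows "(\<Sum>j\<le>dimp1 G. (-1) ^ j * of_nat (j choose k) * coeff (fpoly G) j)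
    = - ((-1) ^ d * coeff (fpoly G) k)"
proof -
  have card_le: "card y \<le> dimp1 G" if "y \<in> insert {} G" for y
    using that simplicial_complex_finite[OF G] unfolding dimp1_eq_Max by (intro Max_ge) auto
  have "(\<Sum>j\<le>dimp1 G. (-1) ^ j * of_nat (j choose k) * coeff (fpoly G) j)
      = (\<Sum>j\<le>dimp1 G. int (card {y\<in>insert {} G. card y = j}) * ((-1) ^ j * int (j choose k)))"
    using coeff_fpoly[OF G] by (intro sum.cong) auto
  also have "\<dots> = (\<Sum>y\<in>insert {} G. (-1) ^ card y * int (card y choose k))"
    using simplicial_complex_finite[OF G] card_le by (intro sum_by_card[symmetric]) auto
  also have "\<dots> = - ((-1) ^ d * coeff (fpoly G) k)"
    using manifold_face_relation[OF assms(1-3)] coeff_fpoly[OF G assms(4)] by simp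
  finally show ?thesis .
qed

section \<open>Homogeneous evaluation and the h-transform\<close>

text \<open>The homogenization of sum_j c_j t^j in formal degree n, evaluated at (a, b). It stands
  in for the rational substitution t = 1/(x - 1) in the definition of h_G.\<close>

definition homog_eval :: "(nat \<Rightarrow> 'a::comm_semiring_1) \<Rightarrow> nat \<Rightarrow> 'a \<Rightarrow> 'a \<Rightarrow> 'a" where
  "homog_eval c n a b = (\<Sum>j\<le>n. c j * a ^ j * b ^ (n - j))"

lemma homog_eval_cong:
  "(\<And>j. j \<le> n \<Longrightarrow> c j = c' j) \<Longrightarrow> homog_eval c n a b = homog_eval c' n a b"
  unfolding homog_eval_def by (intro sum.cong) auto

lemma homog_eval_smult: "homog_eval (\<lambda>j. s * c j) n a b = s * homog_eval c n a b"
  unfolding homog_eval_def by (simp add: sum_distrib_left mult_ac)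

lemma homog_eval_swap: "homog_eval c n b a = homog_eval (\<lambda>j. c (n - j)) n a b"
  unfolding homog_eval_def
  by (rule sum.reindex_bij_witness[where i = "\<lambda>j. n - j" and j = "\<lambda>j. n - j"]) (auto simp: mult_ac)

lemma homog_eval_uminus:
  fixes a b :: "'a::comm_ring_1"
  shows "homog_eval c n (-a) (-b) = (-1) ^ n * homog_eval c n a b"
proof -
  have "(-a) ^ j * (-b) ^ (n - j) = (-1) ^ n * (a ^ j * b ^ (n - j))" if "j \<le> n" for j
  proof -
    have "(-1::'a) ^ j * (-1) ^ (n - j) = (-1) ^ n"
      using that by (simp flip: power_add)
    then show ?thesis
      by (simp add: power_minus[of a] power_minus[of b] mult_ac)
  qed
  then show ?thesis
    unfolding homog_eval_def sum_distrib_left by (intro sum.cong) (auto simp: mult_ac)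
qed

lemma homog_eval_uminus_left:
  fixes a b :: "'a::comm_ring_1"
  shows "homog_eval c n (-a) b = homog_eval (\<lambda>j. (-1) ^ j * c j) n a b"
  unfolding homog_eval_def by (simp add: power_minus[of a] mult_ac)

lemma homog_eval_add_left:
  "homog_eval c n (a + b) b = homog_eval (\<lambda>k. \<Sum>j\<le>n. of_nat (j choose k) * c j) n a b"
proof -
  have binomial: "(a + b) ^ j * b ^ (n - j) = (\<Sum>k\<le>n. of_nat (j choose k) * a ^ k * b ^ (n - k))"
    if "j \<le> n" for j
  proof -
    have "(a + b) ^ j * b ^ (n - j) = (\<Sum>k\<le>j. of_nat (j choose k) * a ^ k * (b ^ (j - k) * b ^ (n - j)))"
      unfolding binomial_ring sum_distrib_right by (simp add: mult.assoc)
    also have "\<dots> = (\<Sum>k\<le>j. of_nat (j choose k) * a ^ k * b ^ (n - k))"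
      using that by (intro sum.cong) (auto simp flip: power_add)
    also have "\<dots> = (\<Sum>k\<le>n. of_nat (j choose k) * a ^ k * b ^ (n - k))"
      using that by (intro sum.mono_neutral_left) (simp_all add: binomial_eq_0)
    finally show ?thesis .
  qed
  have "homog_eval c n (a + b) b = (\<Sum>j\<le>n. \<Sum>k\<le>n. c j * (of_nat (j choose k) * a ^ k * b ^ (n - k)))"
    unfolding homog_eval_def by (intro sum.cong) (auto simp: binomial mult.assoc sum_distrib_left)
  also have "\<dots> = homog_eval (\<lambda>k. \<Sum>j\<le>n. of_nat (j choose k) * c j) n a b"
    unfolding homog_eval_def by (subst sum.swap) (simp add: sum_distrib_left mult_ac)
  finally show ?thesis .
qed

lemma homog_eval_coeff_linear_power:
  fixes a b :: "'a::comm_ring_1"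
  assumes "m \<le> n"
  shows "homog_eval (coeff ([:-1, 1:] ^ m)) n a b = b ^ (n - m) * (a - b) ^ m"
proof -
  have "homog_eval (coeff ([:-1, 1:] ^ m)) n a b
      = (\<Sum>i\<le>m. coeff ([:-1, 1:] ^ m) i * a ^ i * b ^ (n - i))"
    unfolding homog_eval_def using assms
    by (intro sum.mono_neutral_right) (simp_all add: coeff_eq_0 degree_linear_power)
  also have "\<dots> = (\<Sum>i\<le>m. b ^ (n - m) * (of_nat (m choose i) * a ^ i * (-b) ^ (m - i)))"
  proof (intro sum.cong)
    fix i assume "i \<in> {..m}"
    then have b_power: "b ^ (n - i) = b ^ (n - m) * b ^ (m - i)"
      using assms by (simp flip: power_add)
    have coeff_eq: "coeff ([:-1, 1:] ^ m) i = of_nat (m choose i) * (-1) ^ (m - i)"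
      using \<open>i \<in> {..m}\<close> by (simp add: coeff_linear_poly_power)
    show "coeff ([:-1, 1:] ^ m) i * a ^ i * b ^ (n - i)
        = b ^ (n - m) * (of_nat (m choose i) * a ^ i * (-b) ^ (m - i))"
      unfolding coeff_eq b_power power_minus[of b] by (simp add: mult_ac)
  qed simp
  also have "\<dots> = b ^ (n - m) * (a + (-b)) ^ m"
    unfolding binomial_ring[of a "-b"] sum_distrib_left ..
  finally show ?thesis by simp
qed

definition h_transform :: "(nat \<Rightarrow> 'a::comm_ring_1) \<Rightarrow> nat \<Rightarrow> 'a poly" where
  "h_transform c n = (\<Sum>j\<le>n. smult (c j) ([:-1, 1:] ^ (n - j)))"

lemma homog_eval_h_transform:
  "homog_eval (coeff (h_transform c n)) n a b = homog_eval c n b (a - b)"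
proof -
  have "homog_eval (coeff (h_transform c n)) n a b
      = (\<Sum>i\<le>n. \<Sum>j\<le>n. c j * (coeff ([:-1, 1:] ^ (n - j)) i * a ^ i * b ^ (n - i)))"
    unfolding homog_eval_def h_transform_def
    by (intro sum.cong) (simp_all add: coeff_sum sum_distrib_right mult.assoc)
  also have "\<dots> = (\<Sum>j\<le>n. c j * homog_eval (coeff ([:-1, 1:] ^ (n - j))) n a b)"
    unfolding homog_eval_def by (subst sum.swap) (simp add: sum_distrib_left)
  also have "\<dots> = (\<Sum>j\<le>n. c j * (b ^ j * (a - b) ^ (n - j)))"
    by (intro sum.cong) (simp_all add: homog_eval_coeff_linear_power)
  also have "\<dots> = homog_eval c n b (a - b)"
    by (simp add: homog_eval_def mult.assoc)
  finally show ?thesis .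
qed

lemma homog_eval_eqD:
  fixes e e' :: "nat \<Rightarrow> 'a::{idom,ring_char_0}"
  assumes "\<And>a. homog_eval e n a 1 = homog_eval e' n a 1" and "i \<le> n"
  shows "e i = e' i"
proof -
  define p where "p e = (\<Sum>j\<le>n. monom (e j) j)" for e :: "nat \<Rightarrow> 'a"
  have "poly (p e) a = poly (p e') a" for a
    using assms(1)[of a] unfolding p_def homog_eval_def by (simp add: poly_sum poly_monom mult_ac)
  then have "p e = p e'" by (rule poly_ext)
  then have "coeff (p e) i = coeff (p e') i" by simp
  with assms(2) show ?thesis unfolding p_def by (simp add: coeff_sum)
qed

text \<open>The hypothesis is the coefficient form of f(-1 - t) = (-1)^n f(t) for f = sum_j c_j t^j.\<close>

lemma coeff_h_transform_palindromic:
  fixes c :: "nat \<Rightarrow> 'a::{idom,ring_char_0}"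
  assumes rel: "\<And>k. k \<le> n \<Longrightarrow> (\<Sum>j\<le>n. (-1) ^ j * of_nat (j choose k) * c j) = (-1) ^ n * c k"
    and "i \<le> n"
  shows "coeff (h_transform c n) i = coeff (h_transform c n) (n - i)"
proof -
  have reflect: "homog_eval c n (- (a + b)) b = (-1) ^ n * homog_eval c n a b" for a b :: 'a
  proof -
    have "homog_eval c n (- (a + b)) b
        = homog_eval (\<lambda>k. \<Sum>j\<le>n. of_nat (j choose k) * ((-1) ^ j * c j)) n a b"
      by (simp only: homog_eval_uminus_left homog_eval_add_left)
    also have "\<dots> = homog_eval (\<lambda>k. (-1) ^ n * c k) n a b"
      using rel by (intro homog_eval_cong) (simp add: mult_ac)
    finally show ?thesis by (simp add: homog_eval_smult)
  qed
  let ?e = "coeff (h_transform c n)"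
  have symmetric: "homog_eval ?e n a b = homog_eval ?e n b a" for a b :: 'a
  proof -
    have "homog_eval ?e n a b = homog_eval c n b (a - b)"
      by (rule homog_eval_h_transform)
    also have "\<dots> = (-1) ^ n * homog_eval c n (- (a + (b - a))) (b - a)"
      using homog_eval_uminus[of c n "- b" "b - a"] by simp
    also have "\<dots> = homog_eval c n a (b - a)"
      using reflect[of a "b - a"] by simp
    also have "\<dots> = homog_eval ?e n b a"
      by (rule homog_eval_h_transform[symmetric])
    finally show ?thesis .
  qed
  have "homog_eval ?e n a 1 = homog_eval (\<lambda>j. ?e (n - j)) n a 1" for a
    using symmetric[of a 1] homog_eval_swap[of ?e n 1 a] by simp
  then show ?thesis by (rule homog_eval_eqD) (rule assms(2))
qed

lemma hpoly_eq_h_transform: "hpoly G = h_transform (coeff (fpoly G)) (dimp1 G)"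
  unfolding hpoly_def h_transform_def ..

theorem mainTheorem11:
  fixes G :: "'a set set" and d :: nat
  assumes "simplicial_complex G"
    and "manifold d G"
    and "wG G = 1 + (-1) ^ d"
  shows "dehn_sommerville G"
proof -
  let ?n = "dimp1 G" and ?c = "coeff (fpoly G)"
  have rel: "(\<Sum>j\<le>?n. (-1) ^ j * of_nat (j choose k) * ?c j) = - ((-1) ^ d * ?c k)"
    if "k \<le> ?n" for k
    using fpoly_face_relation[OF assms that] .
  \<comment> \<open>At k = dimp1 G only j = k contributes, which fixes the sign.\<close>
  have "(\<Sum>j\<le>?n. (-1) ^ j * of_nat (j choose ?n) * ?c j) = (-1) ^ ?n * ?c ?n"
    by (subst sum.mono_neutral_right[of "{..?n}" "{?n}"]) (auto simp: binomial_eq_0)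
  with rel[of ?n] have "((-1) ^ ?n + (-1) ^ d) * ?c ?n = 0"
    by (simp add: algebra_simps)
  with coeff_fpoly_dimp1_neq_0[OF assms(1)] have "(-1 :: int) ^ ?n = - ((-1) ^ d)"
    by (simp add: eq_neg_iff_add_eq_0)
  with rel have "(\<Sum>j\<le>?n. (-1) ^ j * of_nat (j choose k) * ?c j) = (-1) ^ ?n * ?c k"
    if "k \<le> ?n" for k
    using that by simp
  then show ?thesis
    unfolding dehn_sommerville_def hpoly_eq_h_transform
    using coeff_h_transform_palindromic by blast
qed

end
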